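(* Let $k\ge 2$ be an integer, $b(k)=\frac{k^k}{(k-1)^{k-1}}$, and \[ f_k(\beta)=\log_{b(k)}\!\left(\left(\frac{1-\beta}{k^2}+\beta\right)\left(\frac{\beta}{k^2}+1-\beta\right)^{k-1}\right)-\frac1k . \] Then $f_k(\beta)\le -1$ for all $\beta\in[0,1]$. *)

theory Defs
  imports Complex_Main
begin

definition bk :: "nat \<Rightarrow> real" where
  "bk k = real k ^ k / (real k - 1) ^ (k - 1)"

definition fk :: "nat \<Rightarrow> real \<Rightarrow> real" where
  "fk k \<beta> = log (bk k) (((1 - \<beta>) / (real k)^2 + \<beta>) * (\<beta> / (real k)^2 + 1 - \<beta>) ^ (k - 1)) - 1 / real k"

end

theory Submission
  imports Defs
begin

text \<open>
  The two factors \<open>a = (1 - \<beta>)/k\<^sup>2 + \<beta>\<close> and \<open>c = \<beta>/k\<^sup>2 + 1 - \<beta>\<close> have the constant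
  sum \<open>s = 1 + 1/k\<^sup>2\<close>, and weighted AM-GM with weights \<open>1\<close> and \<open>k - 1\<close> bounds
  \<open>a * c ^ (k - 1)\<close> by \<open>s ^ k / b(k)\<close>. Hence \<open>f\<^sub>k(\<beta>) \<le> k log\<^sub>b s - 1 - 1/k\<close>,
  and \<open>k log\<^sub>b s \<le> k ln s \<le> 1/k\<close> because \<open>b(k) \<ge> 2k > e\<close> and \<open>ln s \<le> s - 1\<close>.
\<close>

lemma mult_power_le_one:
  fixes u v :: real
  assumes "0 \<le> u" "0 \<le> v" "u + real m * v = real m + 1"
  shows "u * v ^ m \<le> 1"
proof -
  have "u * v ^ m \<le> exp (u - 1) * exp (v - 1) ^ m"
    using assms exp_ge_add_one_self[of "u - 1"] exp_ge_add_one_self[of "v - 1"]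
    by (intro mult_mono power_mono) auto
  also have "\<dots> = exp (u - 1 + real m * (v - 1))"
    by (simp add: exp_add exp_of_nat_mult)
  also have "\<dots> = 1"
    using assms(3) by (simp add: algebra_simps)
  finally show ?thesis .
qed

lemma weighted_arith_geo_mean:
  fixes a c :: real
  assumes "0 \<le> a" "0 \<le> c"
  shows "a * c ^ m * (real m + 1) ^ (m + 1) \<le> real m ^ m * (a + c) ^ (m + 1)"
proof (cases "m = 0 \<or> a + c = 0")
  case True
  with assms show ?thesis
    by (cases "m = 0") (auto simp: add_nonneg_eq_0_iff)
next
  case False
  define s where "s = a + c"
  have m: "real m > 0" and s: "s > 0"
    using False assms by (auto simp: s_def)
  define u where "u = (real m + 1) * a / s"
  define v where "v = (real m + 1) * c / (real m * s)"
  have "u + real m * v = (real m + 1) * (a + c) / s"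
    using m s by (simp add: u_def v_def field_simps)
  then have "u * v ^ m \<le> 1"
    using assms m s by (intro mult_power_le_one) (auto simp: u_def v_def s_def)
  moreover have "u * v ^ m = a * c ^ m * (real m + 1) ^ (m + 1) / (real m ^ m * s ^ (m + 1))"
    by (simp add: u_def v_def power_divide power_mult_distrib ac_simps)
  ultimately show ?thesis
    using m s by (simp add: s_def divide_le_eq)
qed

lemma mult_power_le_bk:
  fixes a c :: real
  assumes "k \<ge> 1" "0 \<le> a" "0 \<le> c"
  shows "a * c ^ (k - 1) \<le> (a + c) ^ k / bk k"
proof -
  obtain m where k: "k = m + 1"
    using assms(1) by (metis le_add_diff_inverse2)
  have "(a + c) ^ k / bk k = real m ^ m * (a + c) ^ (m + 1) / (real m + 1) ^ (m + 1)"
    by (simp add: k bk_def algebra_simps)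
  then show ?thesis
    using weighted_arith_geo_mean[OF assms(2,3), of m]
    by (simp add: k pos_le_divide_eq add_pos_nonneg)
qed

lemma bk_ge_double:
  assumes "k \<ge> 2"
  shows "2 * real k \<le> bk k"
proof -
  have k1: "real k - 1 > 0"
    using assms by simp
  have km1: "real (k - 1) = real k - 1"
    using assms by simp
  have "2 \<le> 1 + real (k - 1) * (1 / (real k - 1))"
    using k1 km1 by simp
  also have "\<dots> \<le> (1 + 1 / (real k - 1)) ^ (k - 1)"
    using k1 by (intro Bernoulli_inequality) (simp add: order.trans[of _ 0])
  also have "\<dots> = (real k / (real k - 1)) ^ (k - 1)"
    using k1 by (simp add: field_simps)
  finally have "2 * real k \<le> real k * (real k / (real k - 1)) ^ (k - 1)"
    by (metis mult.commute mult_left_mono of_nat_0_le_iff)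
  also have "\<dots> = bk k"
    using assms by (cases k) (auto simp: bk_def power_divide)
  finally show ?thesis .
qed

lemma ln_bk_ge_one:
  assumes "k \<ge> 2"
  shows "ln (bk k) \<ge> 1"
proof -
  have "exp 1 \<le> bk k"
    using exp_le bk_ge_double[OF assms] assms by simp
  then show ?thesis
    by (metis exp_gt_zero ln_exp ln_le_cancel_iff order_less_le_trans)
qed

lemma log_bk_one_plus_inverse_square:
  assumes "k \<ge> 2"
  shows "real k * log (bk k) (1 + 1 / (real k)\<^sup>2) \<le> 1 / real k"
proof -
  define s where "s = 1 + 1 / (real k)\<^sup>2"
  have s: "s \<ge> 1"
    by (simp add: s_def)
  have "log (bk k) s = ln s / ln (bk k)"
    by (simp add: log_def)
  also have "\<dots> \<le> ln s"
    using ln_bk_ge_one[OF assms] s by (simp add: divide_le_eq mult_le_cancel_left1)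
  also have "\<dots> \<le> s - 1"
    using s by (intro ln_le_minus_one) simp
  also have "\<dots> = 1 / (real k)\<^sup>2"
    by (simp add: s_def)
  finally have "real k * log (bk k) s \<le> real k * (1 / (real k)\<^sup>2)"
    by (rule mult_left_mono) simp
  then show ?thesis
    using assms by (simp add: s_def power2_eq_square)
qed

theorem lemma4p9:
  fixes k :: nat and \<beta> :: real
  assumes "k \<ge> 2" and "0 \<le> \<beta>" and "\<beta> \<le> 1"
  shows "fk k \<beta> \<le> -1"
proof -
  define a where "a = (1 - \<beta>) / (real k)\<^sup>2 + \<beta>"
  define c where "c = \<beta> / (real k)\<^sup>2 + 1 - \<beta>"
  define s where "s = 1 + 1 / (real k)\<^sup>2"
  have b: "bk k > 1"
    using bk_ge_double[OF assms(1)] assms(1) by simp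
  have "a = 1 / (real k)\<^sup>2 + \<beta> * (1 - 1 / (real k)\<^sup>2)"
    "c = 1 / (real k)\<^sup>2 + (1 - \<beta>) * (1 - 1 / (real k)\<^sup>2)"
    by (simp_all add: a_def c_def algebra_simps diff_divide_distrib)
  then have pos: "a > 0" "c > 0"
    using assms by (simp_all add: add_pos_nonneg)
  have sum: "a + c = s"
    by (simp add: a_def c_def s_def add_divide_distrib[symmetric])
  have P: "0 < a * c ^ (k - 1)" "a * c ^ (k - 1) \<le> s ^ k / bk k"
    using pos mult_power_le_bk[of k a c] assms(1) by (simp_all add: sum)
  have "fk k \<beta> = log (bk k) (a * c ^ (k - 1)) - 1 / real k"
    by (simp add: fk_def a_def c_def)
  also have "\<dots> \<le> log (bk k) (s ^ k / bk k) - 1 / real k"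
    using P b by simp
  also have "\<dots> = real k * log (bk k) s - 1 - 1 / real k"
    using b pos sum by (simp add: log_divide_pos log_nat_power)
  also have "\<dots> \<le> -1"
    using log_bk_one_plus_inverse_square[OF assms(1)] by (simp add: s_def)
  finally show ?thesis .
qed

end
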